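(* Let $v,w\in\mathbb C$, let $u\in\mathbb C$ satisfy $u^2=w$, and set $A=-\mathrm{Re}(v)$, $B=-\mathrm{Im}(u)$, $C=-\mathrm{Im}(v)$, $D=\mathrm{Re}(u)$, and assume $BC-AD\neq0$. Let $\Gamma=\{-v(1-\tau)^2\pm2\sqrt{-w(1-(1-\tau)^2)(1-\tau)^2}:\tau\in[0,1]\}$, which is an ellipse passing through the origin. Then the foci of $\Gamma$ are the two roots of $z^2+vz+w$, i.e. the two roots of $Q(z)=z(z^2+vz+w)$ different from the origin. *)

theory Defs
  imports Complex_Main
begin

definition ellipse_with_foci :: "complex \<Rightarrow> complex \<Rightarrow> complex set \<Rightarrow> bool" where
  "ellipse_with_foci f1 f2 E \<longleftrightarrow>
     (\<exists>a::real. cmod (f1 - f2) < 2 * a \<and> E = {z. cmod (z - f1) + cmod (z - f2) = 2 * a})"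

end

theory Submission
  imports Defs
begin

text \<open>Substituting \<open>T = (1 - \<tau>)\<^sup>2\<close>, the point \<open>e = (1 - 2T) \<plusminus> 2i\<surd>(T(1 - T))\<close> runs over the
  unit circle, and the curve becomes the image of the unit circle under
  \<open>e \<mapsto> -v/2 + p e + q cnj e\<close> with \<open>p = (v/2 + u)/2\<close>, \<open>q = (v/2 - u)/2\<close>. Such an image is the set of
  points whose distances to \<open>-v/2 \<plusminus> f\<close> sum to \<open>2(|p| + |q|)\<close>, for either \<open>f\<close> with \<open>f\<^sup>2 = 4pq\<close>;
  it is a genuine ellipse exactly when \<open>|p| \<noteq> |q|\<close>, which is the hypothesis \<open>BC - AD \<noteq> 0\<close>.
  Since \<open>4pq = v\<^sup>2/4 - w\<close>, the points \<open>-v/2 \<plusminus> f\<close> are the roots of \<open>z\<^sup>2 + vz + w\<close>.\<close>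

lemma cmod_parallelogram:
  fixes x y :: complex
  shows "cmod (x + y)^2 + cmod (x - y)^2 = 2 * cmod x^2 + 2 * cmod y^2"
  unfolding cmod_power2 by (simp add: power2_eq_square algebra_simps)

lemma cmod_add_eq_cmod_diff_iff:
  fixes a b :: complex
  shows "cmod (a + b) = cmod (a - b) \<longleftrightarrow> Re a * Re b + Im a * Im b = 0"
proof -
  have diff: "cmod (a + b)^2 - cmod (a - b)^2 = 4 * (Re a * Re b + Im a * Im b)"
    unfolding cmod_power2 by (simp add: power2_eq_square algebra_simps)
  have "cmod (a + b) = cmod (a - b) \<longleftrightarrow> cmod (a + b)^2 - cmod (a - b)^2 = 0"
    by (simp add: power2_eq_iff_nonneg)
  also have "\<dots> \<longleftrightarrow> Re a * Re b + Im a * Im b = 0"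
    by (simp only: diff mult_eq_0_iff) simp
  finally show ?thesis .
qed

lemma norm_foci_sum_scaleR_le:
  fixes x f :: "'a::real_normed_vector"
  assumes "0 \<le> t" "t \<le> 1"
  shows "norm (t *\<^sub>R x - f) + norm (t *\<^sub>R x + f)
           \<le> t * (norm (x - f) + norm (x + f)) + (1 - t) * (2 * norm f)"
proof -
  have "t *\<^sub>R x - f = t *\<^sub>R (x - f) - (1 - t) *\<^sub>R f"
    and "t *\<^sub>R x + f = t *\<^sub>R (x + f) + (1 - t) *\<^sub>R f"
    by (simp_all add: algebra_simps)
  then have "norm (t *\<^sub>R x - f) \<le> t * norm (x - f) + (1 - t) * norm f"
    and "norm (t *\<^sub>R x + f) \<le> t * norm (x + f) + (1 - t) * norm f"
    using norm_triangle_ineq4[of "t *\<^sub>R (x - f)" "(1 - t) *\<^sub>R f"]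
      norm_triangle_ineq[of "t *\<^sub>R (x + f)" "(1 - t) *\<^sub>R f"] assms
    by simp_all
  then show ?thesis
    by (simp add: algebra_simps)
qed

lemma ray_meets_foci_sum_level_once:
  fixes x f :: "'a::real_normed_vector"
  assumes x: "norm (x - f) + norm (x + f) = K"
    and lx: "norm (l *\<^sub>R x - f) + norm (l *\<^sub>R x + f) = K"
    and f: "2 * norm f < K" and "0 \<le> l"
  shows "l = 1"
proof (rule ccontr)
  assume "l \<noteq> 1"
  then consider "l < 1" | "1 < l" by linarith
  then show False
  proof cases
    case 1
    have "K \<le> l * K + (1 - l) * (2 * norm f)"
      using norm_foci_sum_scaleR_le[of l x f] x lx \<open>0 \<le> l\<close> 1 by simp
    moreover have "(1 - l) * (2 * norm f) < (1 - l) * K"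
      using 1 f by simp
    ultimately show False by (simp add: algebra_simps)
  next
    case 2
    have "K \<le> (1 / l) * K + (1 - 1 / l) * (2 * norm f)"
      using norm_foci_sum_scaleR_le[of "1 / l" "l *\<^sub>R x" f] x lx 2 by simp
    moreover have "(1 - 1 / l) * (2 * norm f) < (1 - 1 / l) * K"
      using 2 f by simp
    ultimately show False by (simp add: algebra_simps)
  qed
qed

lemma cmod_foci_sum_on_circle_image:
  fixes p q f e :: complex
  assumes f: "f^2 = 4 * p * q" and e: "cmod e = 1"
  shows "cmod (p * e + q * cnj e - f) + cmod (p * e + q * cnj e + f) = 2 * (cmod p + cmod q)"
proof -
  \<comment> \<open>\<open>(z - f)(z + f) = g\<^sup>2\<close> gives the product of the two focal distances, the parallelogram
    law the sum of their squares.\<close>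
  define z g where "z = p * e + q * cnj e" and "g = p * e - q * cnj e"
  have "e * cnj e = 1"
    using complex_norm_square[of e] e by simp
  then have "(z - f) * (z + f) = g^2"
    using f unfolding z_def g_def by algebra
  then have prod: "cmod (z - f) * cmod (z + f) = cmod g ^ 2"
    by (metis norm_mult norm_power)
  have "cmod z ^ 2 + cmod g ^ 2 = 2 * cmod p ^ 2 + 2 * cmod q ^ 2"
    using cmod_parallelogram[of "p * e" "q * cnj e"] e unfolding z_def g_def by (simp add: norm_mult)
  moreover have "cmod f ^ 2 = 4 * cmod p * cmod q"
    by (metis f norm_mult norm_numeral norm_power)
  ultimately have "(cmod (z - f) + cmod (z + f))^2 = (2 * (cmod p + cmod q))^2"
    using cmod_parallelogram[of z f] prod by (simp add: power2_eq_square algebra_simps)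
  then show ?thesis
    unfolding z_def by (rule power2_eq_imp_eq) auto
qed

lemma cmod_focus_less:
  fixes p q f :: complex
  assumes "f^2 = 4 * p * q" and "cmod p \<noteq> cmod q"
  shows "cmod f < cmod p + cmod q"
proof -
  have "cmod f ^ 2 = 4 * cmod p * cmod q"
    by (metis assms(1) norm_mult norm_numeral norm_power)
  also have "\<dots> < (cmod p + cmod q)^2"
  proof -
    have "0 < (cmod p - cmod q)^2"
      using assms(2) by simp
    then show ?thesis
      by (simp add: power2_eq_square algebra_simps)
  qed
  finally show ?thesis
    by (rule power_less_imp_less_base) simp
qed

lemma conj_linear_surj:
  fixes p q w :: complex
  assumes "cmod p \<noteq> cmod q"
  shows "\<exists>z. p * z + q * cnj z = w"
proof -
  define d where "d = cmod p ^ 2 - cmod q ^ 2"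
  define n where "n = cnj p * w - q * cnj w"
  have "d \<noteq> 0"
    using assms unfolding d_def by (simp add: power2_eq_iff_nonneg)
  have d: "of_real d = p * cnj p - q * cnj q"
    unfolding d_def of_real_diff complex_norm_square ..
  have "p * n + q * cnj n = of_real d * w"
    unfolding n_def d by (simp add: algebra_simps)
  then have "p * (n / of_real d) + q * cnj (n / of_real d) = w"
    using \<open>d \<noteq> 0\<close> by (simp add: field_simps)
  then show ?thesis ..
qed

lemma conj_linear_circle_image_eq_ellipse:
  fixes c p q f :: complex
  assumes f: "f^2 = 4 * p * q" and pq: "cmod p \<noteq> cmod q"
  shows "(\<lambda>e. c + p * e + q * cnj e) ` {e. cmod e = 1}
           = {z. cmod (z - (c + f)) + cmod (z - (c - f)) = 2 * (cmod p + cmod q)}"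
    (is "?image = ?ellipse")
proof
  show "?image \<subseteq> ?ellipse"
    using cmod_foci_sum_on_circle_image[OF f] by (auto simp: algebra_simps)
next
  show "?ellipse \<subseteq> ?image"
  proof
    fix z assume "z \<in> ?ellipse"
    then have z: "cmod ((z - c) - f) + cmod ((z - c) + f) = 2 * (cmod p + cmod q)"
      by (simp add: algebra_simps)
    \<comment> \<open>\<open>z - c\<close> is a positive multiple of a point of the image minus \<open>c\<close>, and a ray from \<open>c\<close>
      meets the level set only once.\<close>
    obtain \<zeta> where \<zeta>: "p * \<zeta> + q * cnj \<zeta> = z - c"
      using conj_linear_surj[OF pq] by blast
    have f_less: "2 * cmod f < 2 * (cmod p + cmod q)"
      using cmod_focus_less[OF f pq] by simp
    then have "z - c \<noteq> 0"
      using z by auto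
    then have "\<zeta> \<noteq> 0"
      using \<zeta> by auto
    define e where "e = \<zeta> / of_real (cmod \<zeta>)"
    have e: "cmod e = 1"
      using \<open>\<zeta> \<noteq> 0\<close> unfolding e_def by (simp add: norm_divide)
    have "of_real (cmod \<zeta>) * e = \<zeta>" "of_real (cmod \<zeta>) * cnj e = cnj \<zeta>"
      using \<open>\<zeta> \<noteq> 0\<close> unfolding e_def by simp_all
    then have scaled: "z - c = cmod \<zeta> *\<^sub>R (p * e + q * cnj e)"
      unfolding \<zeta>[symmetric] scaleR_conv_of_real by (simp add: algebra_simps)
    have "cmod \<zeta> = 1"
      using ray_meets_foci_sum_level_once[OF cmod_foci_sum_on_circle_image[OF f e] _ f_less]
        z scaled by simp
    then have "z = c + p * e + q * cnj e"
      using scaled by (simp add: algebra_simps)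
    with e show "z \<in> ?image" by blast
  qed
qed

lemma ellipse_with_foci_conj_linear_circle_image:
  fixes c p q f :: complex
  assumes "f^2 = 4 * p * q" and "cmod p \<noteq> cmod q"
  shows "ellipse_with_foci (c + f) (c - f) ((\<lambda>e. c + p * e + q * cnj e) ` {e. cmod e = 1})"
  unfolding ellipse_with_foci_def conj_linear_circle_image_eq_ellipse[OF assms]
  using cmod_focus_less[OF assms] by (auto simp: norm_mult)

lemma monic_quadratic_vieta:
  fixes b c r1 r2 :: "'a::comm_ring_1"
  assumes "\<forall>z. z^2 + b * z + c = (z - r1) * (z - r2)"
  shows "r1 + r2 = - b" and "r1 * r2 = c"
proof -
  show c: "r1 * r2 = c"
    using spec[OF assms, of 0] by simp
  have "1 + b + c = (1 - r1) * (1 - r2)"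
    using spec[OF assms, of 1] by simp
  moreover have "b + (r1 + r2) = (1 + b + c) - (1 - r1) * (1 - r2) + (r1 * r2 - c)"
    by (simp add: algebra_simps)
  ultimately show "r1 + r2 = - b"
    using c by (simp add: add_eq_0_iff)
qed

lemma csqrt_power2_cases: "csqrt (z^2) = z \<or> csqrt (z^2) = - z"
  using power2_csqrt[of "z^2"] by (simp only: power2_eq_iff)

lemma unit_circle_param:
  fixes x y :: real
  shows "x^2 + y^2 = 1 \<longleftrightarrow>
           (\<exists>T\<in>{0..1}. \<exists>\<sigma>\<in>{1, -1}. x = 1 - 2 * T \<and> y = 2 * \<sigma> * sqrt ((1 - T) * T))"
proof
  assume xy: "x^2 + y^2 = 1"
  define T where "T = (1 - x) / 2"
  define \<sigma> :: real where "\<sigma> = (if 0 \<le> y then 1 else -1)"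
  have "x^2 \<le> 1"
    using xy by (metis le_add_same_cancel1 zero_le_power2)
  then have "T \<in> {0..1}"
    unfolding T_def by (auto simp: abs_square_le_1 abs_le_iff)
  have "(1 - T) * T = (y / 2)^2"
    using xy unfolding T_def by (simp add: power2_eq_square field_simps)
  then have "y = 2 * \<sigma> * sqrt ((1 - T) * T)"
    unfolding \<sigma>_def by simp
  moreover have "x = 1 - 2 * T" "\<sigma> \<in> {1, -1}"
    unfolding T_def \<sigma>_def by (simp_all add: field_simps)
  ultimately show "\<exists>T\<in>{0..1}. \<exists>\<sigma>\<in>{1, -1}. x = 1 - 2 * T \<and> y = 2 * \<sigma> * sqrt ((1 - T) * T)"
    using \<open>T \<in> {0..1}\<close> by blast
next
  assume "\<exists>T\<in>{0..1}. \<exists>\<sigma>\<in>{1, -1}. x = 1 - 2 * T \<and> y = 2 * \<sigma> * sqrt ((1 - T) * T)"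
  then obtain T \<sigma> :: real where T: "T \<in> {0..1}" and "\<sigma>^2 = 1"
    and x: "x = 1 - 2 * T" and y: "y = 2 * \<sigma> * sqrt ((1 - T) * T)"
    by (metis power2_minus power_one insert_iff singletonD)
  have "y^2 = 4 * \<sigma>^2 * (sqrt ((1 - T) * T))^2"
    unfolding y by (simp add: power_mult_distrib)
  also have "\<dots> = 4 * (1 - T) * T"
    using T \<open>\<sigma>^2 = 1\<close> by simp
  finally show "x^2 + y^2 = 1"
    unfolding x by (simp add: power2_eq_square algebra_simps)
qed

lemma sign_times_csqrt_power2:
  "(\<exists>s\<in>{1, -1}. t = s * csqrt (z^2)) \<longleftrightarrow> (\<exists>\<sigma>\<in>{1, -1::real}. t = of_real \<sigma> * z)"
  using csqrt_power2_cases[of z] by auto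

lemma conj_linear_Complex:
  fixes u v :: complex and x y :: real
  shows "(v/2 + u)/2 * Complex x y + (v/2 - u)/2 * cnj (Complex x y) = v/2 * of_real x + of_real y * (\<i> * u)"
  unfolding Complex_eq by (simp add: field_simps)

definition gamma_curve :: "complex \<Rightarrow> complex \<Rightarrow> complex set" where
  "gamma_curve v w = {- v * (1 - complex_of_real \<tau>) ^ 2 + s * 2 *
                  csqrt (- w * (1 - (1 - complex_of_real \<tau>) ^ 2) * (1 - complex_of_real \<tau>) ^ 2)
                | \<tau> s. \<tau> \<in> {0..1} \<and> s \<in> {1, -1}}"

lemma zero_in_gamma_curve: "0 \<in> gamma_curve v w"
  unfolding gamma_curve_def by (rule CollectI, rule exI[of _ 1], rule exI[of _ 1]) simp

lemma gamma_curve_eq_sqrt_param: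
  fixes v w u :: complex
  assumes "u^2 = w"
  shows "gamma_curve v w = {- v * of_real T + of_real (2 * \<sigma> * sqrt ((1 - T) * T)) * (\<i> * u)
           | T \<sigma>. T \<in> {0..1} \<and> \<sigma> \<in> {1, -1}}"
    (is "?curve = ?param")
proof -
  have radicand: "- w * (1 - of_real T) * of_real T = (of_real (sqrt ((1 - T) * T)) * (\<i> * u))^2"
    if "T \<in> {0..1}" for T :: real
  proof -
    have "(complex_of_real (sqrt ((1 - T) * T)))^2 = of_real ((1 - T) * T)"
      using that by (simp flip: of_real_power)
    then have "(of_real (sqrt ((1 - T) * T)) * (\<i> * u))^2 = - (u^2) * of_real ((1 - T) * T)"
      by (simp only: power_mult_distrib) simp
    then show ?thesis
      using assms by simp
  qed
  show ?thesis
  proof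
    show "?curve \<subseteq> ?param"
    proof
      fix z assume "z \<in> ?curve"
      then obtain \<tau> s where \<tau>: "\<tau> \<in> {0..1}" and s: "s \<in> {1, -1}" and z: "z = - v * (1 - complex_of_real \<tau>) ^ 2 + s * 2 *
             csqrt (- w * (1 - (1 - complex_of_real \<tau>) ^ 2) * (1 - complex_of_real \<tau>) ^ 2)"
        unfolding gamma_curve_def by blast
      define T where "T = (1 - \<tau>)^2"
      define \<zeta> where "\<zeta> = of_real (sqrt ((1 - T) * T)) * (\<i> * u)"
      have T: "T \<in> {0..1}" and tT: "(1 - complex_of_real \<tau>)^2 = of_real T"
        using \<tau> unfolding T_def by (auto simp: power_le_one)
      obtain \<sigma> :: real where \<sigma>: "\<sigma> \<in> {1, -1}" and "s * csqrt (\<zeta>^2) = of_real \<sigma> * \<zeta>"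
        using sign_times_csqrt_power2[of "s * csqrt (\<zeta>^2)" \<zeta>] s by blast
      then have "z = - v * of_real T + of_real (2 * \<sigma> * sqrt ((1 - T) * T)) * (\<i> * u)"
        unfolding z tT radicand[OF T, folded \<zeta>_def] by (simp add: \<zeta>_def algebra_simps)
      then show "z \<in> ?param"
        using T \<sigma> by blast
    qed
  next
    show "?param \<subseteq> ?curve"
    proof
      fix z assume "z \<in> ?param"
      then obtain T \<sigma> :: real where T: "T \<in> {0..1}" and \<sigma>: "\<sigma> \<in> {1, -1}"
        and z: "z = - v * of_real T + of_real (2 * \<sigma> * sqrt ((1 - T) * T)) * (\<i> * u)"
        by blast
      define \<tau> where "\<tau> = 1 - sqrt T"
      define \<zeta> where "\<zeta> = of_real (sqrt ((1 - T) * T)) * (\<i> * u)"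
      have \<tau>: "\<tau> \<in> {0..1}" and tT: "(1 - complex_of_real \<tau>)^2 = of_real T"
        using T unfolding \<tau>_def by (auto simp flip: of_real_power)
      obtain s where s: "s \<in> {1, -1}" and "of_real \<sigma> * \<zeta> = s * csqrt (\<zeta>^2)"
        using sign_times_csqrt_power2[of "of_real \<sigma> * \<zeta>" \<zeta>] \<sigma> by blast
      then have "z = - v * (1 - complex_of_real \<tau>) ^ 2 + s * 2 *
             csqrt (- w * (1 - (1 - complex_of_real \<tau>) ^ 2) * (1 - complex_of_real \<tau>) ^ 2)"
        unfolding z tT radicand[OF T, folded \<zeta>_def] by (simp add: \<zeta>_def algebra_simps)
      then show "z \<in> ?curve"
        unfolding gamma_curve_def using \<tau> s by blast
    qed
  qed
qed

lemma sqrt_param_eq_circle_image: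
  fixes u v :: complex
  shows "{- v * of_real T + of_real (2 * \<sigma> * sqrt ((1 - T) * T)) * (\<i> * u)
           | T \<sigma>. T \<in> {0..1} \<and> \<sigma> \<in> {1, -1}}
       = (\<lambda>e. - v/2 + (v/2 + u)/2 * e + (v/2 - u)/2 * cnj e) ` {e. cmod e = 1}"
    (is "?param = ?image")
proof -
  have point: "- v/2 + (v/2 + u)/2 * Complex (1 - 2 * T) y + (v/2 - u)/2 * cnj (Complex (1 - 2 * T) y)
                 = - v * of_real T + of_real y * (\<i> * u)" for T y :: real
    using conj_linear_Complex[of v u "1 - 2 * T" y] by (simp add: algebra_simps)
  have on_circle: "cmod (Complex x y) = 1 \<longleftrightarrow> x^2 + y^2 = 1" for x y :: real
    by (simp add: complex_norm)
  show ?thesis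
  proof
    show "?param \<subseteq> ?image"
    proof
      fix z assume "z \<in> ?param"
      then obtain T \<sigma> :: real where T: "T \<in> {0..1}" and \<sigma>: "\<sigma> \<in> {1, -1}"
        and z: "z = - v * of_real T + of_real (2 * \<sigma> * sqrt ((1 - T) * T)) * (\<i> * u)"
        by blast
      define e where "e = Complex (1 - 2 * T) (2 * \<sigma> * sqrt ((1 - T) * T))"
      have "cmod e = 1"
        unfolding e_def on_circle unit_circle_param using T \<sigma> by blast
      moreover have "z = - v/2 + (v/2 + u)/2 * e + (v/2 - u)/2 * cnj e"
        unfolding z e_def point ..
      ultimately show "z \<in> ?image" by blast
    qed
  next
    show "?image \<subseteq> ?param"
    proof
      fix z assume "z \<in> ?image"
      then obtain e where "cmod e = 1" and z: "z = - v/2 + (v/2 + u)/2 * e + (v/2 - u)/2 * cnj e"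
        by blast
      then have "(Re e)^2 + (Im e)^2 = 1"
        using on_circle[of "Re e" "Im e"] by simp
      then obtain T \<sigma> :: real where "T \<in> {0..1}" "\<sigma> \<in> {1, -1}"
        and e: "e = Complex (1 - 2 * T) (2 * \<sigma> * sqrt ((1 - T) * T))"
        unfolding unit_circle_param by (metis complex_surj)
      then show "z \<in> ?param"
        unfolding z e point by blast
    qed
  qed
qed

lemma gamma_curve_eq_circle_image:
  assumes "u^2 = w"
  shows "gamma_curve v w = (\<lambda>e. - v/2 + (v/2 + u)/2 * e + (v/2 - u)/2 * cnj e) ` {e. cmod e = 1}"
  unfolding gamma_curve_eq_sqrt_param[OF assms] sqrt_param_eq_circle_image ..

theorem lemma2p3:
  fixes v w u r1 r2 :: complex
  assumes "u ^ 2 = w"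
    and "(- Im u) * (- Im v) - (- Re v) * Re u \<noteq> 0"
    and "\<forall>z. z ^ 2 + v * z + w = (z - r1) * (z - r2)"
  shows "0 \<in> {- v * (1 - complex_of_real \<tau>) ^ 2 + s * 2 *
                  csqrt (- w * (1 - (1 - complex_of_real \<tau>) ^ 2) * (1 - complex_of_real \<tau>) ^ 2)
                | \<tau> s. \<tau> \<in> {0..1} \<and> s \<in> {1, -1}}
       \<and> ellipse_with_foci r1 r2
          {- v * (1 - complex_of_real \<tau>) ^ 2 + s * 2 *
                  csqrt (- w * (1 - (1 - complex_of_real \<tau>) ^ 2) * (1 - complex_of_real \<tau>) ^ 2)
                | \<tau> s. \<tau> \<in> {0..1} \<and> s \<in> {1, -1}}"
proof -
  define p q f where "p = (v/2 + u)/2" and "q = (v/2 - u)/2" and "f = (r1 - r2)/2"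
  have sum: "r1 + r2 = - v" and prod: "r1 * r2 = w"
    using monic_quadratic_vieta[OF assms(3)] by simp_all
  have "f^2 = ((r1 + r2)^2 - 4 * (r1 * r2)) / 4"
    unfolding f_def by (simp add: power2_eq_square field_simps)
  also have "\<dots> = 4 * p * q"
    unfolding sum prod assms(1)[symmetric] p_def q_def by (simp add: power2_eq_square field_simps)
  finally have f: "f^2 = 4 * p * q" .
  have "cmod (v/2 + u) \<noteq> cmod (v/2 - u)"
    using assms(2) unfolding cmod_add_eq_cmod_diff_iff by (simp add: algebra_simps)
  then have pq: "cmod p \<noteq> cmod q"
    unfolding p_def q_def by (simp add: norm_divide)
  have "- v/2 + f = r1" "- v/2 - f = r2"
    unfolding f_def sum[symmetric] by (simp_all add: field_simps)
  then have "ellipse_with_foci r1 r2 (gamma_curve v w)"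
    using ellipse_with_foci_conj_linear_circle_image[OF f pq, of "- v/2"]
    unfolding gamma_curve_eq_circle_image[OF assms(1)] p_def q_def by simp
  then show ?thesis
    using zero_in_gamma_curve unfolding gamma_curve_def by blast
qed

end
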